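(* Fix $\alpha>1$ and parameters $\varepsilon_0,\delta_0,r,\varepsilon_1,\delta_1,\Delta^{\mathrm{disc}},\Delta>0$, and let $\phi_r$ be the weighted partition selection primitive defined from them. Let $\Delta_0\in\mathbb{N}$ and $\Delta_r\le\Delta$, and call $X,X'\in\mathbb{R}_{\ge0}^U$ neighbors if $\|X-X'\|_0\le\Delta_0$ and $\|X-X'\|_r\le\Delta_r$. Then, provided $\delta := \delta_0\Delta_0+\delta_1\Delta_r^r < 1$, the mechanism $M_{\phi_r}$ (the SNAPS mechanism) is $(\delta,\alpha,\varepsilon)$-RDP with respect to this neighboring relation, where $\varepsilon = \varepsilon_0\Delta_0+\varepsilon_1\Delta_r^r$.
   Context: $\mathrm{Ber}(p)$: Bernoulli distribution. For $\alpha>1$, $D_\alpha(P\|Q)=\frac{1}{\alpha-1}\log\sum_x P(x)^\alpha Q(x)^{1-\alpha}$ and $D^\delta_\alpha(P\|Q)=\inf\{D_\alpha(P'\|Q'): P=(1-\delta)P'+\delta P'',\ Q=(1-\delta)Q'+\delta Q''\}$ over probability distributions. Define $L(q,\varepsilon,\delta) = \max\{p\in[q,1] : D^\delta_\alpha(\mathrm{Ber}(p)\|\mathrm{Ber}(q))\le\varepsilon \text{ and } D^\delta_\alpha(\mathrm{Ber}(q)\|\mathrm{Ber}(p))\le\varepsilon\}$. Let $N_{\mathrm{disc}} = \lceil \Delta/\Delta^{\mathrm{disc}}\rceil$. The discretized primitive $\psi_r:\mathbb{Z}_{\ge0}\to[0,1]$ is $\psi_r(0)=0$ and, for $n>0$,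 $$\psi_r(n) = \min_{i\in\{1,\dots,\min\{n,N_{\mathrm{disc}}\}\}} L\!\left(\psi_r(n-i),\ \varepsilon_0+\varepsilon_1(\Delta^{\mathrm{disc}}(i-1))^r,\ \delta_0+\delta_1(\Delta^{\mathrm{disc}}(i-1))^r\right).$$ The weighted primitive is $\phi_r(y) = \psi_r(\lfloor y/\Delta^{\mathrm{disc}}\rfloor)$ for $y\ge0$. For $X\in\mathbb{R}_{\ge0}^U$, $M_{\phi_r}(X)$ includes each $u\in U$ independently with probability $\phi_r(X_u)$. $\|\cdot\|_0$ counts nonzero coordinates. $(\delta,\alpha,\varepsilon)$-RDP means $D^\delta_\alpha(M(X)\|M(X'))\le\varepsilon$ for all neighbors $X,X'$ in both orders. *)

theory Defs
  imports "HOL-Probability.Probability"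
begin

definition renyi_div :: "real \<Rightarrow> 'a::finite pmf \<Rightarrow> 'a pmf \<Rightarrow> ereal" where
  "renyi_div \<alpha> P Q =
     (if \<exists>x. pmf P x > 0 \<and> pmf Q x = 0 then \<infinity>
      else ereal (ln (\<Sum>x\<in>UNIV. pmf P x powr \<alpha> * pmf Q x powr (1 - \<alpha>)) / (\<alpha> - 1)))"

definition approx_renyi_div :: "real \<Rightarrow> real \<Rightarrow> 'a::finite pmf \<Rightarrow> 'a pmf \<Rightarrow> ereal" where
  "approx_renyi_div \<alpha> \<delta> P Q =
     Inf {renyi_div \<alpha> P' Q' | P' P'' Q' Q''.
            (\<forall>x. pmf P x = (1 - \<delta>) * pmf P' x + \<delta> * pmf P'' x) \<and>
            (\<forall>x. pmf Q x = (1 - \<delta>) * pmf Q' x + \<delta> * pmf Q'' x)}"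

text \<open>L(q, eps, delta) (the maximum, written as a supremum).\<close>
definition L_fun :: "real \<Rightarrow> real \<Rightarrow> real \<Rightarrow> real \<Rightarrow> real" where
  "L_fun \<alpha> q \<epsilon> \<delta> = Sup {p \<in> {q..1}.
      approx_renyi_div \<alpha> \<delta> (bernoulli_pmf p) (bernoulli_pmf q) \<le> ereal \<epsilon> \<and>
      approx_renyi_div \<alpha> \<delta> (bernoulli_pmf q) (bernoulli_pmf p) \<le> ereal \<epsilon>}"

definition N_disc :: "real \<Rightarrow> real \<Rightarrow> nat" where
  "N_disc \<Delta> \<Delta>disc = nat \<lceil>\<Delta> / \<Delta>disc\<rceil>"

function psi :: "real \<Rightarrow> real \<Rightarrow> real \<Rightarrow> real \<Rightarrow> real \<Rightarrow> real \<Rightarrow> real \<Rightarrow> real \<Rightarrow> nat \<Rightarrow> real" where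
  "psi \<alpha> \<epsilon>0 \<delta>0 r \<epsilon>1 \<delta>1 \<Delta>disc \<Delta> n =
     (if n = 0 then 0
      else Min ((\<lambda>i. L_fun \<alpha> (psi \<alpha> \<epsilon>0 \<delta>0 r \<epsilon>1 \<delta>1 \<Delta>disc \<Delta> (n - i))
                     (\<epsilon>0 + \<epsilon>1 * (\<Delta>disc * real (i - 1)) powr r)
                     (\<delta>0 + \<delta>1 * (\<Delta>disc * real (i - 1)) powr r))
                ` {1..min n (N_disc \<Delta> \<Delta>disc)}))"
  by pat_completeness auto
termination
  by (relation "Wellfounded.measure (\<lambda>(\<alpha>, \<epsilon>0, \<delta>0, r, \<epsilon>1, \<delta>1, \<Delta>disc, \<Delta>, n). n)") auto

definition phi :: "real \<Rightarrow> real \<Rightarrow> real \<Rightarrow> real \<Rightarrow> real \<Rightarrow> real \<Rightarrow> real \<Rightarrow> real \<Rightarrow> real \<Rightarrow> real" where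
  "phi \<alpha> \<epsilon>0 \<delta>0 r \<epsilon>1 \<delta>1 \<Delta>disc \<Delta> y =
     psi \<alpha> \<epsilon>0 \<delta>0 r \<epsilon>1 \<delta>1 \<Delta>disc \<Delta> (nat \<lfloor>y / \<Delta>disc\<rfloor>)"

definition mech :: "(real \<Rightarrow> real) \<Rightarrow> ('u::finite \<Rightarrow> real) \<Rightarrow> 'u set pmf" where
  "mech f X = map_pmf (\<lambda>b. {u. b u}) (Pi_pmf UNIV False (\<lambda>u. bernoulli_pmf (f (X u))))"

definition l0_dist :: "('u::finite \<Rightarrow> real) \<Rightarrow> ('u \<Rightarrow> real) \<Rightarrow> nat" where
  "l0_dist X X' = card {u. X u \<noteq> X' u}"

definition lr_dist :: "real \<Rightarrow> ('u::finite \<Rightarrow> real) \<Rightarrow> ('u \<Rightarrow> real) \<Rightarrow> real" where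
  "lr_dist r X X' = (\<Sum>u\<in>UNIV. \<bar>X u - X' u\<bar> powr r) powr (1 / r)"

definition neighbors :: "nat \<Rightarrow> real \<Rightarrow> real \<Rightarrow> ('u::finite \<Rightarrow> real) \<Rightarrow> ('u \<Rightarrow> real) \<Rightarrow> bool" where
  "neighbors \<Delta>0 \<Delta>r r X X' \<longleftrightarrow>
     (\<forall>u. X u \<ge> 0) \<and> (\<forall>u. X' u \<ge> 0) \<and> l0_dist X X' \<le> \<Delta>0 \<and> lr_dist r X X' \<le> \<Delta>r"

definition is_RDP :: "real \<Rightarrow> real \<Rightarrow> real \<Rightarrow> ('x \<Rightarrow> 'x \<Rightarrow> bool) \<Rightarrow> ('x \<Rightarrow> 'o::finite pmf) \<Rightarrow> bool" where
  "is_RDP \<delta> \<alpha> \<epsilon> nb M \<longleftrightarrow>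
     (\<forall>X X'. nb X X' \<longrightarrow>
        approx_renyi_div \<alpha> \<delta> (M X) (M X') \<le> ereal \<epsilon> \<and>
        approx_renyi_div \<alpha> \<delta> (M X') (M X) \<le> ereal \<epsilon>)"

end

(*
  The mechanism includes the elements of U independently, so its output distributions are
  products of Bernoulli distributions. Renyi sums factor over such products, and mixture
  decompositions of the factors combine by Weierstrass' inequality
  prod (1 - delta_u) >= 1 - sum delta_u. It therefore suffices to decompose each coordinate
  with a budget (eps_u, delta_u) such that the budgets sum to at most (eps, delta).

  For two Bernoulli distributions the two-sided delta-approximate bound has a closed form:
  a^alpha c^(1 - alpha) is convex in each argument, so the best mixture components are the
  extreme ones, (p - delta)/(1 - delta) and q/(1 - delta). This closed form is monotone and
  closed from the left in p, hence the supremum defining L is attained and every p between q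
  and L q eps delta satisfies the bound. As psi_r is monotone, two inputs whose cells
  floor (x / Delta_disc) are k steps apart receive probabilities related through the k-th term
  of the minimum defining psi_r, whose cost eps_0 + eps_1 (Delta_disc (k - 1))^r is at most
  eps_0 + eps_1 |x - x'|^r; summed over the at most Delta_0 changed coordinates this is eps.
*)

theory Submission
  imports Defs
begin

lemma powr_convex_nonpos:
  fixes p :: real assumes "p \<le> 0" shows "convex_on {0<..} (\<lambda>x. x powr p)"
proof (rule f''_ge0_imp_convex[where f' = "\<lambda>x. p * x powr (p-1)" and f'' = "\<lambda>x. p * ((p-1) * x powr (p-2))"])
  fix x :: real assume "x \<in> {0<..}"
  then show "((\<lambda>x. x powr p) has_real_derivative p * x powr (p-1)) (at x)"
    and "((\<lambda>x. p * x powr (p-1)) has_real_derivative p * ((p-1) * x powr (p-2))) (at x)"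
    by (auto intro!: derivative_eq_intros)
  show "0 \<le> p * ((p-1) * x powr (p-2))"
    using assms by (intro mult_nonpos_nonpos) (auto intro!: mult_nonpos_nonneg)
qed simp

lemma powr_convex_combination_le:
  fixes a c l \<alpha> :: real
  assumes "\<alpha> \<ge> 1" "0 \<le> a" "0 \<le> c" "0 \<le> l" "l \<le> 1"
  shows "(l*a + (1-l)*c) powr \<alpha> \<le> l * a powr \<alpha> + (1-l) * c powr \<alpha>"
proof -
  have scale: "(t*x) powr \<alpha> \<le> t * x powr \<alpha>" if "0 \<le> t" "t \<le> 1" "0 \<le> x" for t x :: real
  proof -
    have "t powr \<alpha> \<le> t"
      using that assms(1) by (metis order_le_neq_trans powr_le_one_le powr_nonneg_iff)
    then show ?thesis
      using that by (simp add: powr_mult mult_right_mono)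
  qed
  consider "a = 0" | "c = 0" | "a > 0" "c > 0" using assms by linarith
  then show ?thesis
  proof cases
    case 3
    then show ?thesis using convex_onD[OF powr_convex[OF assms(1)], of "1-l" a c] assms by auto
  qed (use assms scale[of "1-l" c] scale[of l a] in auto)
qed

definition renyi_term :: "real \<Rightarrow> real \<Rightarrow> real \<Rightarrow> real" where
  "renyi_term \<alpha> a c = a powr \<alpha> * c powr (1 - \<alpha>)"

lemma renyi_term_nonneg: "renyi_term \<alpha> a c \<ge> 0"
  by (simp add: renyi_term_def)

lemma renyi_term_self: "0 \<le> c \<Longrightarrow> renyi_term \<alpha> c c = c"
  by (cases "c = 0") (auto simp: renyi_term_def powr_add[symmetric])

lemma renyi_term_mix_left:
  assumes "\<alpha> \<ge> 1" "0 \<le> a" "0 \<le> c" "0 \<le> l" "l \<le> 1"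
  shows "renyi_term \<alpha> (l*a + (1-l)*c) c \<le> l * renyi_term \<alpha> a c + (1-l) * c"
proof -
  have "renyi_term \<alpha> (l*a + (1-l)*c) c \<le> (l * a powr \<alpha> + (1-l) * c powr \<alpha>) * c powr (1-\<alpha>)"
    unfolding renyi_term_def
    by (rule mult_right_mono[OF powr_convex_combination_le]) (use assms in auto)
  also have "\<dots> = l * renyi_term \<alpha> a c + (1-l) * renyi_term \<alpha> c c"
    by (simp add: renyi_term_def algebra_simps)
  finally show ?thesis using renyi_term_self assms by simp
qed

lemma renyi_term_mix_right:
  assumes "\<alpha> \<ge> 1" "0 \<le> a" "0 \<le> c" "0 \<le> l" "l \<le> 1" "a > 0 \<longrightarrow> c > 0"
  shows "renyi_term \<alpha> a (l*c + (1-l)*a) \<le> l * renyi_term \<alpha> a c + (1-l) * a"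
proof (cases "a = 0")
  case True then show ?thesis by (simp add: renyi_term_def)
next
  case False
  with assms have "a > 0" "c > 0" by auto
  have "renyi_term \<alpha> a (l*c + (1-l)*a) \<le> a powr \<alpha> * (l * c powr (1-\<alpha>) + (1-l) * a powr (1-\<alpha>))"
    unfolding renyi_term_def
    using convex_onD[OF powr_convex_nonpos[of "1-\<alpha>"], of "1-l" c a] assms \<open>a > 0\<close> \<open>c > 0\<close>
    by (intro mult_left_mono) auto
  also have "\<dots> = l * renyi_term \<alpha> a c + (1-l) * renyi_term \<alpha> a a"
    by (simp add: renyi_term_def algebra_simps)
  finally show ?thesis using renyi_term_self assms by simp
qed

definition bern_renyi_sum :: "real \<Rightarrow> real \<Rightarrow> real \<Rightarrow> real" where
  "bern_renyi_sum \<alpha> a c = renyi_term \<alpha> a c + renyi_term \<alpha> (1-a) (1-c)"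

text \<open>The Renyi divergence of order \<open>\<alpha>\<close> from \<open>Ber a\<close> to \<open>Ber c\<close> is at most \<open>ln E / (\<alpha> - 1)\<close>
  (lemma renyi_div_bernoulli_le_iff).\<close>
definition bern_renyi_bounded :: "real \<Rightarrow> real \<Rightarrow> real \<Rightarrow> real \<Rightarrow> bool" where
  "bern_renyi_bounded \<alpha> E a c \<longleftrightarrow>
     (0 < a \<longrightarrow> 0 < c) \<and> (a < 1 \<longrightarrow> c < 1) \<and> bern_renyi_sum \<alpha> a c \<le> E"

lemma bern_renyi_bounded_mono: "E \<le> E' \<Longrightarrow> bern_renyi_bounded \<alpha> E a c \<Longrightarrow> bern_renyi_bounded \<alpha> E' a c"
  by (simp add: bern_renyi_bounded_def)

lemma bern_renyi_bounded_refl: "0 \<le> c \<Longrightarrow> c \<le> 1 \<Longrightarrow> 1 \<le> E \<Longrightarrow> bern_renyi_bounded \<alpha> E c c"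
  by (simp add: bern_renyi_bounded_def bern_renyi_sum_def renyi_term_self)

lemma bern_renyi_bounded_segment_left:
  assumes "\<alpha> \<ge> 1" "E \<ge> 1" "bern_renyi_bounded \<alpha> E a c" "a \<in> {0..1}" "c \<in> {0..1}"
    and "z \<in> closed_segment c a"
  shows "bern_renyi_bounded \<alpha> E z c"
proof -
  obtain l where l: "0 \<le> l" "l \<le> 1" "z = l*a + (1-l)*c"
    using assms(6) by (auto simp: in_segment algebra_simps)
  have compl: "1 - z = l*(1-a) + (1-l)*(1-c)" by (simp add: l algebra_simps)
  have "bern_renyi_sum \<alpha> z c \<le> (l * renyi_term \<alpha> a c + (1-l) * c)
          + (l * renyi_term \<alpha> (1-a) (1-c) + (1-l) * (1-c))"
    unfolding bern_renyi_sum_def compl unfolding l(3)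
    by (rule add_mono[OF renyi_term_mix_left renyi_term_mix_left]) (use assms l in auto)
  also have "\<dots> = l * bern_renyi_sum \<alpha> a c + (1-l)"
    by (simp add: bern_renyi_sum_def algebra_simps)
  also have "\<dots> \<le> l * E + (1-l) * E"
    using assms l mult_left_mono[of 1 E "1-l"]
    by (intro add_mono mult_left_mono) (auto simp: bern_renyi_bounded_def)
  finally have "bern_renyi_sum \<alpha> z c \<le> E" by (simp add: algebra_simps)
  moreover have "0 < c" if "0 < z"
    using that assms l by (cases "a = 0"; cases "c = 0") (auto simp: bern_renyi_bounded_def)
  moreover have "c < 1" if "z < 1"
    using that assms l compl by (cases "a = 1"; cases "c = 1") (auto simp: bern_renyi_bounded_def)
  ultimately show ?thesis by (simp add: bern_renyi_bounded_def)
qed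

lemma bern_renyi_bounded_segment_right:
  assumes "\<alpha> \<ge> 1" "E \<ge> 1" "bern_renyi_bounded \<alpha> E a c" "a \<in> {0..1}" "c \<in> {0..1}"
    and "w \<in> closed_segment a c"
  shows "bern_renyi_bounded \<alpha> E a w"
proof -
  obtain l where l: "0 \<le> l" "l \<le> 1" "w = l*c + (1-l)*a"
    using assms(6) by (auto simp: in_segment algebra_simps)
  have compl: "1 - w = l*(1-c) + (1-l)*(1-a)" by (simp add: l algebra_simps)
  have "bern_renyi_sum \<alpha> a w \<le> (l * renyi_term \<alpha> a c + (1-l) * a)
          + (l * renyi_term \<alpha> (1-a) (1-c) + (1-l) * (1-a))"
    unfolding bern_renyi_sum_def compl unfolding l(3)
    by (rule add_mono[OF renyi_term_mix_right renyi_term_mix_right]) (use assms l in \<open>auto simp: bern_renyi_bounded_def\<close>)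
  also have "\<dots> = l * bern_renyi_sum \<alpha> a c + (1-l)"
    by (simp add: bern_renyi_sum_def algebra_simps)
  also have "\<dots> \<le> l * E + (1-l) * E"
    using assms l mult_left_mono[of 1 E "1-l"]
    by (intro add_mono mult_left_mono) (auto simp: bern_renyi_bounded_def)
  finally have "bern_renyi_sum \<alpha> a w \<le> E" by (simp add: algebra_simps)
  moreover have "0 < w" if "0 < a"
    using that assms(3) l convex_bound_lt[of "-c" 0 "-a" l "1-l"]
    by (auto simp: bern_renyi_bounded_def)
  moreover have "w < 1" if "a < 1"
    using that assms(3) l convex_bound_lt[of c 1 a l "1-l"]
    by (auto simp: bern_renyi_bounded_def)
  ultimately show ?thesis by (simp add: bern_renyi_bounded_def)
qed

lemma bern_renyi_bounded_shrink:
  assumes "\<alpha> \<ge> 1" "E \<ge> 1" "bern_renyi_bounded \<alpha> E a c" "a \<in> {0..1}" "c \<in> {0..1}"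
    and "a' \<in> closed_segment a c" "c' \<in> closed_segment a' c"
  shows "bern_renyi_bounded \<alpha> E a' c'"
proof -
  have "a' \<in> {0..1}"
    using assms(4-6) by (auto simp: closed_segment_eq_real_ivl split: if_splits)
  moreover have "bern_renyi_bounded \<alpha> E a' c"
    using bern_renyi_bounded_segment_left[OF assms(1-5)] assms(6)
    by (simp add: closed_segment_commute)
  ultimately show ?thesis
    using bern_renyi_bounded_segment_right assms by blast
qed

lemma sum_pmf_UNIV: "(\<Sum>x\<in>UNIV. pmf (P :: 'a::finite pmf) x) = 1"
  by (rule sum_pmf_eq_1) auto

lemma renyi_div_le_iff:
  fixes P Q :: "'a::finite pmf"
  assumes "\<alpha> > 1"
  shows "renyi_div \<alpha> P Q \<le> ereal \<epsilon> \<longleftrightarrow>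
           (\<forall>x. pmf P x > 0 \<longrightarrow> pmf Q x > 0) \<and>
           (\<Sum>x\<in>UNIV. pmf P x powr \<alpha> * pmf Q x powr (1 - \<alpha>)) \<le> exp ((\<alpha> - 1) * \<epsilon>)"
proof (cases "\<forall>x. pmf P x > 0 \<longrightarrow> pmf Q x > 0")
  case True
  define S where "S = (\<Sum>x\<in>UNIV. pmf P x powr \<alpha> * pmf Q x powr (1 - \<alpha>))"
  obtain x where "pmf P x > 0"
    using set_pmf_not_empty[of P] by (auto intro: pmf_positive)
  with True have "0 < pmf P x powr \<alpha> * pmf Q x powr (1 - \<alpha>)" by (auto intro!: mult_pos_pos)
  also have "\<dots> \<le> S" unfolding S_def by (rule member_le_sum) auto
  finally have "S > 0" .
  have "renyi_div \<alpha> P Q = ereal (ln S / (\<alpha> - 1))"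
    using True by (auto simp: renyi_div_def S_def)
  moreover have "ln S / (\<alpha> - 1) \<le> \<epsilon> \<longleftrightarrow> S \<le> exp ((\<alpha> - 1) * \<epsilon>)"
    using assms \<open>S > 0\<close> ln_le_cancel_iff[of S "exp ((\<alpha> - 1) * \<epsilon>)"]
    by (simp add: divide_le_eq mult.commute)
  ultimately show ?thesis using True by (simp add: S_def)
next
  case False
  then show ?thesis by (auto simp: renyi_div_def)
qed

lemma renyi_div_self: "renyi_div \<alpha> P P = 0"
proof -
  have "(\<Sum>x\<in>UNIV. pmf P x powr \<alpha> * pmf P x powr (1 - \<alpha>)) = (\<Sum>x\<in>UNIV. pmf P x)"
    by (rule sum.cong) (auto simp: powr_add[symmetric] simp del: powr_add)
  then show ?thesis by (auto simp: renyi_div_def sum_pmf_UNIV)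
qed

lemma renyi_div_bernoulli_le_iff:
  assumes "\<alpha> > 1" "a \<in> {0..1}" "c \<in> {0..1}"
  shows "renyi_div \<alpha> (bernoulli_pmf a) (bernoulli_pmf c) \<le> ereal \<epsilon> \<longleftrightarrow>
           bern_renyi_bounded \<alpha> (exp ((\<alpha> - 1) * \<epsilon>)) a c"
  using assms unfolding renyi_div_le_iff[OF assms(1)] bern_renyi_bounded_def bern_renyi_sum_def
  by (simp add: UNIV_bool all_bool_eq renyi_term_def add.commute)

lemma bool_pmf_eq_bernoulli_pmf: "P = bernoulli_pmf (pmf P True)"
proof (rule pmf_eqI)
  fix b show "pmf P b = pmf (bernoulli_pmf (pmf P True)) b"
    by (cases b) (simp_all add: pmf_False_conv_True pmf_le_1)
qed

lemma renyi_div_bool_le_iff: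
  fixes P Q :: "bool pmf"
  assumes "\<alpha> > 1"
  shows "renyi_div \<alpha> P Q \<le> ereal \<epsilon> \<longleftrightarrow>
           bern_renyi_bounded \<alpha> (exp ((\<alpha> - 1) * \<epsilon>)) (pmf P True) (pmf Q True)"
  using renyi_div_bernoulli_le_iff[OF assms, of "pmf P True" "pmf Q True"]
  by (simp add: pmf_le_1 flip: bool_pmf_eq_bernoulli_pmf)

lemma pmf_mixture_complement:
  fixes P P' :: "'a::finite pmf"
  assumes "\<delta> \<ge> 0" "\<forall>x. (1-\<delta>) * pmf P' x \<le> pmf P x"
  shows "\<exists>P''. \<forall>x. pmf P x = (1-\<delta>) * pmf P' x + \<delta> * pmf P'' x"
proof (cases "\<delta> = 0")
  case True
  have "(\<Sum>x\<in>UNIV. pmf P x - pmf P' x) = 0"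
    by (simp add: sum_subtractf sum_pmf_UNIV)
  moreover have "\<forall>x\<in>UNIV. 0 \<le> pmf P x - pmf P' x" using assms True by auto
  ultimately have "\<forall>x. pmf P x = pmf P' x"
    using sum_nonneg_eq_0_iff[of UNIV "\<lambda>x. pmf P x - pmf P' x"] by auto
  then show ?thesis using True by auto
next
  case False
  with assms have "\<delta> > 0" by auto
  define f where "f x = (pmf P x - (1-\<delta>) * pmf P' x) / \<delta>" for x
  have f_nonneg: "\<And>x. 0 \<le> f x" unfolding f_def using assms \<open>\<delta> > 0\<close> by auto
  have "(\<Sum>x\<in>UNIV. f x) = ((\<Sum>x\<in>UNIV. pmf P x) - (1-\<delta>) * (\<Sum>x\<in>UNIV. pmf P' x)) / \<delta>"
    unfolding f_def by (simp add: sum_divide_distrib[symmetric] sum_subtractf sum_distrib_left)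
  also have "\<dots> = 1" using \<open>\<delta> > 0\<close> by (simp add: sum_pmf_UNIV)
  finally have f_prob: "(\<integral>\<^sup>+x. f x \<partial>count_space UNIV) = 1"
    by (subst nn_integral_count_space_finite) (auto simp: f_nonneg)
  show ?thesis
    using \<open>\<delta> > 0\<close> by (intro exI[of _ "embed_pmf f"]) (simp add: pmf_embed_pmf[OF f_nonneg f_prob] f_def)
qed

lemma approx_renyi_div_le_renyi_div:
  fixes P P' Q Q' :: "'a::finite pmf"
  assumes "\<delta> \<ge> 0" "\<forall>x. (1-\<delta>) * pmf P' x \<le> pmf P x" "\<forall>x. (1-\<delta>) * pmf Q' x \<le> pmf Q x"
  shows "approx_renyi_div \<alpha> \<delta> P Q \<le> renyi_div \<alpha> P' Q'"
proof -
  obtain P'' Q'' where "\<forall>x. pmf P x = (1-\<delta>) * pmf P' x + \<delta> * pmf P'' x"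
    and "\<forall>x. pmf Q x = (1-\<delta>) * pmf Q' x + \<delta> * pmf Q'' x"
    using pmf_mixture_complement assms by metis
  then show ?thesis unfolding approx_renyi_div_def by (blast intro: Inf_lower)
qed

definition mix_lower :: "real \<Rightarrow> real \<Rightarrow> real" where
  "mix_lower \<delta> p = max 0 ((p - \<delta>) / (1 - \<delta>))"

definition mix_upper :: "real \<Rightarrow> real \<Rightarrow> real" where
  "mix_upper \<delta> p = min 1 (p / (1 - \<delta>))"

text \<open>\<open>Ber a\<close> can be the weight \<open>1 - \<delta>\<close> part of a mixture decomposition of \<open>Ber p\<close>.\<close>
definition bern_component :: "real \<Rightarrow> real \<Rightarrow> real \<Rightarrow> bool" where
  "bern_component \<delta> p a \<longleftrightarrow> 0 \<le> a \<and> a \<le> 1 \<and> (1-\<delta>)*a \<le> p \<and> (1-\<delta>)*(1-a) \<le> 1-p"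

lemma bern_component_iff:
  "0 < \<delta> \<Longrightarrow> \<delta> < 1 \<Longrightarrow> bern_component \<delta> p a \<longleftrightarrow> a \<in> {mix_lower \<delta> p..mix_upper \<delta> p}"
  unfolding bern_component_def mix_lower_def mix_upper_def
  by (auto simp: pos_divide_le_eq pos_le_divide_eq algebra_simps)

lemma mix_lower_le_upper: "0 < \<delta> \<Longrightarrow> \<delta> < 1 \<Longrightarrow> p \<in> {0..1} \<Longrightarrow> mix_lower \<delta> p \<le> mix_upper \<delta> p"
  unfolding mix_lower_def mix_upper_def by (auto simp: divide_le_eq field_simps)

lemma mix_lower_mono: "\<delta> < 1 \<Longrightarrow> p \<le> p' \<Longrightarrow> mix_lower \<delta> p \<le> mix_lower \<delta> p'"
  unfolding mix_lower_def by (intro max.mono divide_right_mono) auto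

lemma mix_upper_mono: "\<delta> < 1 \<Longrightarrow> q \<le> q' \<Longrightarrow> mix_upper \<delta> q \<le> mix_upper \<delta> q'"
  unfolding mix_upper_def by (intro min.mono divide_right_mono) auto

lemma mix_lower_range: "0 < \<delta> \<Longrightarrow> \<delta> < 1 \<Longrightarrow> p \<le> 1 \<Longrightarrow> mix_lower \<delta> p \<in> {0..1}"
  unfolding mix_lower_def by (auto simp: divide_le_eq)

lemma mix_upper_range: "0 < \<delta> \<Longrightarrow> \<delta> < 1 \<Longrightarrow> 0 \<le> q \<Longrightarrow> mix_upper \<delta> q \<in> {0..1}"
  unfolding mix_upper_def by auto

lemma bern_component_mix_lower: "0 < \<delta> \<Longrightarrow> \<delta> < 1 \<Longrightarrow> p \<in> {0..1} \<Longrightarrow> bern_component \<delta> p (mix_lower \<delta> p)"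
  and bern_component_mix_upper: "0 < \<delta> \<Longrightarrow> \<delta> < 1 \<Longrightarrow> p \<in> {0..1} \<Longrightarrow> bern_component \<delta> p (mix_upper \<delta> p)"
  by (simp_all add: bern_component_iff mix_lower_le_upper)

lemma bern_component_self: "0 \<le> \<delta> \<Longrightarrow> p \<in> {0..1} \<Longrightarrow> bern_component \<delta> p p"
  unfolding bern_component_def by (auto simp: algebra_simps mult_left_le)

lemma bern_component_mono: "\<delta> \<le> \<delta>' \<Longrightarrow> bern_component \<delta> p a \<Longrightarrow> bern_component \<delta>' p a"
  unfolding bern_component_def by (smt (verit) mult_right_mono)

lemma bern_component_pmf_le:
  assumes "p \<in> {0..1}" "bern_component \<delta> p a"
  shows "\<forall>x. (1-\<delta>) * pmf (bernoulli_pmf a) x \<le> pmf (bernoulli_pmf p) x"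
  using assms unfolding bern_component_def by (auto simp: all_bool_eq)

lemma bern_component_of_mixture:
  fixes P' P'' :: "bool pmf"
  assumes "p \<in> {0..1}" "0 \<le> \<delta>" "\<forall>x. pmf (bernoulli_pmf p) x = (1-\<delta>) * pmf P' x + \<delta> * pmf P'' x"
  shows "bern_component \<delta> p (pmf P' True)"
proof -
  have "p = (1-\<delta>) * pmf P' True + \<delta> * pmf P'' True"
    and "1 - p = (1-\<delta>) * (1 - pmf P' True) + \<delta> * (1 - pmf P'' True)"
    using assms(1) assms(3)[rule_format, of True] assms(3)[rule_format, of False]
    by (simp_all add: pmf_False_conv_True)
  moreover have "\<delta> * pmf P'' True \<ge> 0" "\<delta> * (1 - pmf P'' True) \<ge> 0"
    using assms(2) by (auto simp: pmf_le_1)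
  ultimately show ?thesis unfolding bern_component_def by (auto simp: pmf_le_1)
qed

text \<open>For \<open>q \<le> p\<close> this is the two-sided \<open>\<delta>\<close>-approximate bound between \<open>Ber p\<close> and \<open>Ber q\<close>
  (lemma approx_renyi_div_bernoulli_iff); by bern_renyi_bounded_shrink the extreme components
  \<open>mix_lower \<delta> p\<close> and \<open>mix_upper \<delta> q\<close> are the best witnesses.\<close>
definition bern_indist :: "real \<Rightarrow> real \<Rightarrow> real \<Rightarrow> real \<Rightarrow> real \<Rightarrow> bool" where
  "bern_indist \<alpha> E \<delta> p q \<longleftrightarrow> mix_lower \<delta> p \<le> mix_upper \<delta> q \<or>
     (bern_renyi_bounded \<alpha> E (mix_lower \<delta> p) (mix_upper \<delta> q) \<and>
      bern_renyi_bounded \<alpha> E (mix_upper \<delta> q) (mix_lower \<delta> p))"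

lemma bern_indist_refl: "0 < \<delta> \<Longrightarrow> \<delta> < 1 \<Longrightarrow> q \<in> {0..1} \<Longrightarrow> bern_indist \<alpha> E \<delta> q q"
  unfolding bern_indist_def using mix_lower_le_upper by blast

lemma bern_indist_witnesses:
  assumes "E \<ge> 1" "0 < \<delta>" "\<delta> < 1" "0 \<le> q" "q \<le> p" "p \<le> 1" "bern_indist \<alpha> E \<delta> p q"
  shows "\<exists>a c. bern_component \<delta> p a \<and> bern_component \<delta> q c \<and> bern_renyi_bounded \<alpha> E a c"
    and "\<exists>a c. bern_component \<delta> q a \<and> bern_component \<delta> p c \<and> bern_renyi_bounded \<alpha> E a c"
proof -
  have p: "bern_component \<delta> p (mix_lower \<delta> p)" and q: "bern_component \<delta> q (mix_upper \<delta> q)"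
    using assms bern_component_mix_lower bern_component_mix_upper by auto
  have "(\<exists>a c. bern_component \<delta> p a \<and> bern_component \<delta> q c \<and> bern_renyi_bounded \<alpha> E a c) \<and>
        (\<exists>a c. bern_component \<delta> q a \<and> bern_component \<delta> p c \<and> bern_renyi_bounded \<alpha> E a c)"
  proof (cases "mix_lower \<delta> p \<le> mix_upper \<delta> q")
    case True
    have "mix_lower \<delta> q \<le> mix_lower \<delta> p" using mix_lower_mono assms by auto
    with True have "bern_component \<delta> q (mix_lower \<delta> p)" using bern_component_iff assms by auto
    moreover have "bern_renyi_bounded \<alpha> E (mix_lower \<delta> p) (mix_lower \<delta> p)"
      using bern_renyi_bounded_refl mix_lower_range assms by auto
    ultimately show ?thesis using p by blast
  next
    case False
    then show ?thesis using p q assms(7) unfolding bern_indist_def by blast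
  qed
  then show "\<exists>a c. bern_component \<delta> p a \<and> bern_component \<delta> q c \<and> bern_renyi_bounded \<alpha> E a c"
    and "\<exists>a c. bern_component \<delta> q a \<and> bern_component \<delta> p c \<and> bern_renyi_bounded \<alpha> E a c"
    by blast+
qed

lemma bern_indist_mono:
  assumes "\<alpha> > 1" "E \<ge> 1" "0 < \<delta>" "\<delta> < 1" "0 \<le> q" "q \<le> q'" "q' \<le> p'" "p' \<le> p" "p \<le> 1"
    and "bern_indist \<alpha> E \<delta> p q"
  shows "bern_indist \<alpha> E \<delta> p' q'"
proof (cases "mix_lower \<delta> p' \<le> mix_upper \<delta> q'")
  case False
  define x y x' y' where "x = mix_lower \<delta> p" and "y = mix_upper \<delta> q"
    and "x' = mix_lower \<delta> p'" and "y' = mix_upper \<delta> q'"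
  have order: "y \<le> y'" "y' < x'" "x' \<le> x"
    using False mix_lower_mono mix_upper_mono assms unfolding x_def y_def x'_def y'_def by auto
  have ranges: "x \<in> {0..1}" "y \<in> {0..1}"
    using mix_lower_range mix_upper_range assms unfolding x_def y_def by auto
  have "bern_renyi_bounded \<alpha> E x y" "bern_renyi_bounded \<alpha> E y x"
    using assms(10) order unfolding bern_indist_def x_def y_def x'_def y'_def by auto
  then have "bern_renyi_bounded \<alpha> E x' y'" "bern_renyi_bounded \<alpha> E y' x'"
    using bern_renyi_bounded_shrink[of \<alpha> E] assms(1,2) ranges order
    by (auto simp: closed_segment_eq_real_ivl)
  then show ?thesis unfolding bern_indist_def x'_def y'_def by blast
qed (simp add: bern_indist_def)

lemma approx_renyi_div_bernoulli_le:
  assumes "\<alpha> > 1" "0 \<le> \<delta>" "p \<in> {0..1}" "q \<in> {0..1}"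
    and "bern_component \<delta> p a" "bern_component \<delta> q c"
    and "bern_renyi_bounded \<alpha> (exp ((\<alpha> - 1) * \<epsilon>)) a c"
  shows "approx_renyi_div \<alpha> \<delta> (bernoulli_pmf p) (bernoulli_pmf q) \<le> ereal \<epsilon>"
proof -
  have "approx_renyi_div \<alpha> \<delta> (bernoulli_pmf p) (bernoulli_pmf q)
          \<le> renyi_div \<alpha> (bernoulli_pmf a) (bernoulli_pmf c)"
    using assms by (intro approx_renyi_div_le_renyi_div bern_component_pmf_le)
  also have "\<dots> \<le> ereal \<epsilon>"
    using assms renyi_div_bernoulli_le_iff by (auto simp: bern_component_def)
  finally show ?thesis .
qed

lemma approx_renyi_div_bernoulli_less:
  assumes "\<alpha> > 1" "0 \<le> \<delta>" "p \<in> {0..1}" "q \<in> {0..1}"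
    and "approx_renyi_div \<alpha> \<delta> (bernoulli_pmf p) (bernoulli_pmf q) < ereal \<epsilon>"
  obtains a c where "bern_component \<delta> p a" "bern_component \<delta> q c"
    and "bern_renyi_bounded \<alpha> (exp ((\<alpha> - 1) * \<epsilon>)) a c"
proof -
  obtain P' P'' Q' Q'' where
    "\<forall>x. pmf (bernoulli_pmf p) x = (1-\<delta>) * pmf P' x + \<delta> * pmf P'' x"
    "\<forall>x. pmf (bernoulli_pmf q) x = (1-\<delta>) * pmf Q' x + \<delta> * pmf Q'' x"
    "renyi_div \<alpha> P' Q' < ereal \<epsilon>"
    using assms(5) unfolding approx_renyi_div_def Inf_less_iff by blast
  then show ?thesis
    using that assms bern_component_of_mixture renyi_div_bool_le_iff[OF assms(1)]
    by (meson less_imp_le)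
qed

lemma approx_renyi_div_bernoulli_less_extremes:
  assumes "\<alpha> > 1" "\<epsilon> \<ge> 0" "0 < \<delta>" "\<delta> < 1" "0 \<le> q" "q \<le> p" "p \<le> 1"
    and "mix_upper \<delta> q < mix_lower \<delta> p"
    and "approx_renyi_div \<alpha> \<delta> (bernoulli_pmf p) (bernoulli_pmf q) < ereal \<epsilon>"
    and "approx_renyi_div \<alpha> \<delta> (bernoulli_pmf q) (bernoulli_pmf p) < ereal \<epsilon>"
  defines "E \<equiv> exp ((\<alpha> - 1) * \<epsilon>)"
  shows "bern_renyi_bounded \<alpha> E (mix_lower \<delta> p) (mix_upper \<delta> q)"
    and "bern_renyi_bounded \<alpha> E (mix_upper \<delta> q) (mix_lower \<delta> p)"
proof -
  have "E \<ge> 1" using assms by (simp add: E_def)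
  obtain a c where ac: "bern_component \<delta> p a" "bern_component \<delta> q c" "bern_renyi_bounded \<alpha> E a c"
    using approx_renyi_div_bernoulli_less[OF _ _ _ _ assms(9)] assms unfolding E_def by auto
  have "a \<in> {0..1}" "c \<in> {0..1}" using ac by (auto simp: bern_component_def)
  with ac show "bern_renyi_bounded \<alpha> E (mix_lower \<delta> p) (mix_upper \<delta> q)"
    using bern_renyi_bounded_shrink[of \<alpha> E a c] assms \<open>E \<ge> 1\<close>
    by (auto simp: bern_component_iff closed_segment_eq_real_ivl)
  obtain a' c' where ac': "bern_component \<delta> q a'" "bern_component \<delta> p c'" "bern_renyi_bounded \<alpha> E a' c'"
    using approx_renyi_div_bernoulli_less[OF _ _ _ _ assms(10)] assms unfolding E_def by auto
  have "a' \<in> {0..1}" "c' \<in> {0..1}" using ac' by (auto simp: bern_component_def)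
  with ac' show "bern_renyi_bounded \<alpha> E (mix_upper \<delta> q) (mix_lower \<delta> p)"
    using bern_renyi_bounded_shrink[of \<alpha> E a' c'] assms \<open>E \<ge> 1\<close>
    by (auto simp: bern_component_iff closed_segment_eq_real_ivl)
qed

lemma approx_renyi_div_bernoulli_iff:
  assumes "\<alpha> > 1" "\<epsilon> \<ge> 0" "0 < \<delta>" "\<delta> < 1" "0 \<le> q" "q \<le> p" "p \<le> 1"
  shows "approx_renyi_div \<alpha> \<delta> (bernoulli_pmf p) (bernoulli_pmf q) \<le> ereal \<epsilon> \<and>
         approx_renyi_div \<alpha> \<delta> (bernoulli_pmf q) (bernoulli_pmf p) \<le> ereal \<epsilon>
     \<longleftrightarrow> bern_indist \<alpha> (exp ((\<alpha> - 1) * \<epsilon>)) \<delta> p q"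
proof
  assume "bern_indist \<alpha> (exp ((\<alpha> - 1) * \<epsilon>)) \<delta> p q"
  with assms show "approx_renyi_div \<alpha> \<delta> (bernoulli_pmf p) (bernoulli_pmf q) \<le> ereal \<epsilon> \<and>
         approx_renyi_div \<alpha> \<delta> (bernoulli_pmf q) (bernoulli_pmf p) \<le> ereal \<epsilon>"
    using bern_indist_witnesses[of "exp ((\<alpha> - 1) * \<epsilon>)" \<delta> q p \<alpha>]
    by (auto intro: approx_renyi_div_bernoulli_le)
next
  assume approx: "approx_renyi_div \<alpha> \<delta> (bernoulli_pmf p) (bernoulli_pmf q) \<le> ereal \<epsilon> \<and>
         approx_renyi_div \<alpha> \<delta> (bernoulli_pmf q) (bernoulli_pmf p) \<le> ereal \<epsilon>"
  define x y where "x = mix_lower \<delta> p" and "y = mix_upper \<delta> q"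
  have ranges: "x \<in> {0..1}" "y \<in> {0..1}"
    using mix_lower_range mix_upper_range assms unfolding x_def y_def by auto
  show "bern_indist \<alpha> (exp ((\<alpha> - 1) * \<epsilon>)) \<delta> p q"
  proof (cases "x \<le> y")
    case False
    \<comment> \<open>the infimum defining \<open>approx_renyi_div\<close> need not be attained, so we approach \<open>\<epsilon>\<close> from above\<close>
    have "renyi_div \<alpha> (bernoulli_pmf x) (bernoulli_pmf y) \<le> ereal \<epsilon> + ereal e \<and>
          renyi_div \<alpha> (bernoulli_pmf y) (bernoulli_pmf x) \<le> ereal \<epsilon> + ereal e" if "e > 0" for e
    proof -
      have "approx_renyi_div \<alpha> \<delta> (bernoulli_pmf p) (bernoulli_pmf q) < ereal (\<epsilon> + e)"
          "approx_renyi_div \<alpha> \<delta> (bernoulli_pmf q) (bernoulli_pmf p) < ereal (\<epsilon> + e)"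
        using approx \<open>e > 0\<close> by (auto intro: le_less_trans)
      then show ?thesis
        using approx_renyi_div_bernoulli_less_extremes[of \<alpha> "\<epsilon> + e" \<delta> q p] assms \<open>e > 0\<close> False
          renyi_div_bernoulli_le_iff[OF assms(1) ranges] renyi_div_bernoulli_le_iff[OF assms(1) ranges(2,1)]
        unfolding x_def y_def by simp
    qed
    then have "renyi_div \<alpha> (bernoulli_pmf x) (bernoulli_pmf y) \<le> ereal \<epsilon>"
      "renyi_div \<alpha> (bernoulli_pmf y) (bernoulli_pmf x) \<le> ereal \<epsilon>"
      by (blast intro: ereal_le_epsilon2)+
    then show ?thesis
      using renyi_div_bernoulli_le_iff[OF assms(1) ranges] renyi_div_bernoulli_le_iff[OF assms(1) ranges(2,1)]
      unfolding bern_indist_def x_def y_def by blast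
  qed (simp add: bern_indist_def x_def y_def)
qed

lemma bern_renyi_bounded_tendsto_left:
  assumes "\<alpha> > 0" "0 \<le> y" "(f \<longlongrightarrow> x) F" "F \<noteq> bot"
    and "eventually (\<lambda>t. y < f t \<and> f t \<le> 1 \<and> bern_renyi_bounded \<alpha> E (f t) y) F"
  shows "bern_renyi_bounded \<alpha> E x y"
proof -
  obtain t where t: "y < f t" "f t \<le> 1" "bern_renyi_bounded \<alpha> E (f t) y"
    using eventually_happens'[OF assms(4,5)] by blast
  then have "0 < y" "y < 1" using assms(2) by (auto simp: bern_renyi_bounded_def)
  have "((\<lambda>t. bern_renyi_sum \<alpha> (f t) y) \<longlongrightarrow> bern_renyi_sum \<alpha> x y) F"
    unfolding bern_renyi_sum_def renyi_term_def
    using assms(1,2,5) \<open>y < 1\<close>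
    by (intro tendsto_intros assms(3)) (auto elim: eventually_mono)
  then have "bern_renyi_sum \<alpha> x y \<le> E"
    by (rule tendsto_upperbound[OF _ eventually_mono[OF assms(5)] assms(4)])
      (auto simp: bern_renyi_bounded_def)
  then show ?thesis using \<open>0 < y\<close> \<open>y < 1\<close> by (simp add: bern_renyi_bounded_def)
qed

lemma bern_renyi_bounded_limit_lt_1:
  assumes "\<alpha> > 1" "y < 1" "(f \<longlongrightarrow> x) F" "F \<noteq> bot"
    and "eventually (\<lambda>t. f t < 1 \<and> bern_renyi_bounded \<alpha> E y (f t)) F"
  shows "x < 1"
proof -
  have "x \<le> 1"
    by (rule tendsto_upperbound[OF assms(3) eventually_mono[OF assms(5)] assms(4)]) auto
  moreover have "x \<noteq> 1"
  proof
    assume "x = 1"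
    \<comment> \<open>the term \<open>(1-y)^\<alpha> (1 - f t)^(1-\<alpha>)\<close> of the Renyi sum blows up as \<open>f t \<rightarrow> 1\<close>\<close>
    have "((\<lambda>t. E * (1 - f t) powr (\<alpha> - 1)) \<longlongrightarrow> E * (1 - x) powr (\<alpha> - 1)) F"
      using assms(1,5) by (intro tendsto_intros assms(3)) (auto elim: eventually_mono)
    moreover have "eventually (\<lambda>t. (1 - y) powr \<alpha> \<le> E * (1 - f t) powr (\<alpha> - 1)) F"
      using assms(5)
    proof eventually_elim
      case (elim t)
      then have "renyi_term \<alpha> (1 - y) (1 - f t) \<le> E"
        using renyi_term_nonneg[of \<alpha> y "f t"]
        by (auto simp: bern_renyi_bounded_def bern_renyi_sum_def)
      moreover have "(1 - f t) powr (1 - \<alpha>) * (1 - f t) powr (\<alpha> - 1) = 1"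
        using elim by (simp add: powr_add[symmetric])
      ultimately show ?case
        using elim mult_right_mono[of "renyi_term \<alpha> (1 - y) (1 - f t)" E "(1 - f t) powr (\<alpha> - 1)"]
        by (simp add: renyi_term_def mult.assoc)
    qed
    ultimately have "(1 - y) powr \<alpha> \<le> E * (1 - x) powr (\<alpha> - 1)"
      using assms(4) by (rule tendsto_lowerbound)
    with \<open>x = 1\<close> \<open>y < 1\<close> show False by simp
  qed
  ultimately show "x < 1" by simp
qed

lemma bern_renyi_bounded_tendsto_right:
  assumes "\<alpha> > 1" "0 \<le> y" "y < x" "(f \<longlongrightarrow> x) F" "F \<noteq> bot"
    and "eventually (\<lambda>t. y < f t \<and> f t < 1 \<and> bern_renyi_bounded \<alpha> E y (f t)) F"
  shows "bern_renyi_bounded \<alpha> E y x"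
proof -
  have "y < 1"
    using eventually_happens'[OF assms(5,6)] by auto
  then have "x < 1"
    using assms(6) by (intro bern_renyi_bounded_limit_lt_1[OF assms(1) _ assms(4,5)]) (auto elim: eventually_mono)
  have "((\<lambda>t. bern_renyi_sum \<alpha> y (f t)) \<longlongrightarrow> bern_renyi_sum \<alpha> y x) F"
    unfolding bern_renyi_sum_def renyi_term_def
    using assms(2,3) \<open>x < 1\<close> by (intro tendsto_intros assms(4)) auto
  then have "bern_renyi_sum \<alpha> y x \<le> E"
    by (rule tendsto_upperbound[OF _ eventually_mono[OF assms(6)] assms(5)])
      (auto simp: bern_renyi_bounded_def)
  then show ?thesis using assms(2,3) \<open>x < 1\<close> by (simp add: bern_renyi_bounded_def)
qed

lemma bern_indist_left_closed:
  assumes "\<alpha> > 1" "0 < \<delta>" "\<delta> < 1" "0 \<le> q" "q < s" "s \<le> 1"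
    and "\<And>p. q \<le> p \<Longrightarrow> p < s \<Longrightarrow> bern_indist \<alpha> E \<delta> p q"
  shows "bern_indist \<alpha> E \<delta> s q"
proof (cases "mix_lower \<delta> s \<le> mix_upper \<delta> q")
  case False
  define y where "y = mix_upper \<delta> q"
  have "0 \<le> y" using assms unfolding y_def mix_upper_def by simp
  have lim: "((\<lambda>p. mix_lower \<delta> p) \<longlongrightarrow> mix_lower \<delta> s) (at_left s)"
    unfolding mix_lower_def using assms by (intro tendsto_intros) auto
  have "eventually (\<lambda>p. y < mix_lower \<delta> p \<and> p \<in> {q<..<s}) (at_left s)"
    using order_tendstoD(1)[OF lim] False eventually_at_left_real[OF assms(5)]
    by (auto simp: y_def intro: eventually_conj)
  then have "eventually (\<lambda>p. y < mix_lower \<delta> p \<and> mix_lower \<delta> p < 1 \<and>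
      bern_renyi_bounded \<alpha> E (mix_lower \<delta> p) y \<and> bern_renyi_bounded \<alpha> E y (mix_lower \<delta> p)) (at_left s)"
  proof eventually_elim
    case (elim p)
    then have "mix_lower \<delta> p < 1"
      using assms by (auto simp: mix_lower_def divide_less_eq)
    with elim assms(7)[of p] show ?case by (auto simp: bern_indist_def y_def)
  qed
  moreover have "at_left s \<noteq> bot" using trivial_limit_at_left_real by blast
  ultimately have "bern_renyi_bounded \<alpha> E (mix_lower \<delta> s) y" "bern_renyi_bounded \<alpha> E y (mix_lower \<delta> s)"
    using assms(1) \<open>0 \<le> y\<close> False
    by (auto intro!: bern_renyi_bounded_tendsto_left[OF _ _ lim] bern_renyi_bounded_tendsto_right[OF _ _ _ lim]
        elim: eventually_mono simp: y_def)
  then show ?thesis by (simp add: bern_indist_def y_def)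
qed (simp add: bern_indist_def)

lemma L_fun_eq_Sup:
  assumes "\<alpha> > 1" "\<epsilon> \<ge> 0" "0 < \<delta>" "\<delta> < 1" "0 \<le> q"
  shows "L_fun \<alpha> q \<epsilon> \<delta> = Sup {p \<in> {q..1}. bern_indist \<alpha> (exp ((\<alpha> - 1) * \<epsilon>)) \<delta> p q}"
  unfolding L_fun_def using approx_renyi_div_bernoulli_iff[OF assms] by (metis (lifting) atLeastAtMost_iff)

lemma L_fun_indist:
  assumes "\<alpha> > 1" "\<epsilon> \<ge> 0" "0 < \<delta>" "\<delta> < 1" "q \<in> {0..1}"
  shows "L_fun \<alpha> q \<epsilon> \<delta> \<in> {q..1}"
    and "bern_indist \<alpha> (exp ((\<alpha> - 1) * \<epsilon>)) \<delta> (L_fun \<alpha> q \<epsilon> \<delta>) q"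
proof -
  define E where "E = exp ((\<alpha> - 1) * \<epsilon>)"
  define T where "T = {p \<in> {q..1}. bern_indist \<alpha> E \<delta> p q}"
  have L: "L_fun \<alpha> q \<epsilon> \<delta> = Sup T"
    using L_fun_eq_Sup assms unfolding T_def E_def by auto
  have "q \<in> T" unfolding T_def using bern_indist_refl assms by auto
  have "bdd_above T" unfolding T_def by (rule bdd_aboveI[of _ 1]) auto
  have "Sup T \<le> 1" by (rule cSup_least) (use \<open>q \<in> T\<close> in \<open>auto simp: T_def\<close>)
  then show "L_fun \<alpha> q \<epsilon> \<delta> \<in> {q..1}"
    using cSup_upper[OF \<open>q \<in> T\<close> \<open>bdd_above T\<close>] L by simp
  have "bern_indist \<alpha> E \<delta> (Sup T) q"
  proof (cases "Sup T = q")
    case False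
    then have "q < Sup T" using cSup_upper[OF \<open>q \<in> T\<close> \<open>bdd_above T\<close>] by simp
    show ?thesis
    proof (rule bern_indist_left_closed[OF assms(1,3,4) _ \<open>q < Sup T\<close> \<open>Sup T \<le> 1\<close>])
      fix p assume "q \<le> p" "p < Sup T"
      then obtain p' where "p' \<in> T" "p < p'"
        using less_cSup_iff[of T p] \<open>q \<in> T\<close> \<open>bdd_above T\<close> by blast
      then show "bern_indist \<alpha> E \<delta> p q"
        using bern_indist_mono[of \<alpha> E \<delta> q q p p'] assms \<open>q \<le> p\<close> unfolding T_def E_def by auto
    qed (use assms in auto)
  qed (use \<open>q \<in> T\<close> T_def in auto)
  then show "bern_indist \<alpha> (exp ((\<alpha> - 1) * \<epsilon>)) \<delta> (L_fun \<alpha> q \<epsilon> \<delta>) q"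
    using L unfolding E_def by simp
qed

lemma le_L_fun_iff:
  assumes "\<alpha> > 1" "\<epsilon> \<ge> 0" "0 < \<delta>" "\<delta> < 1" "0 \<le> q" "q \<le> p" "p \<le> 1"
  shows "p \<le> L_fun \<alpha> q \<epsilon> \<delta> \<longleftrightarrow> bern_indist \<alpha> (exp ((\<alpha> - 1) * \<epsilon>)) \<delta> p q"
proof
  assume "p \<le> L_fun \<alpha> q \<epsilon> \<delta>"
  then show "bern_indist \<alpha> (exp ((\<alpha> - 1) * \<epsilon>)) \<delta> p q"
    using L_fun_indist[of \<alpha> \<epsilon> \<delta> q] bern_indist_mono[of \<alpha> _ \<delta> q q p] assms by auto
next
  assume "bern_indist \<alpha> (exp ((\<alpha> - 1) * \<epsilon>)) \<delta> p q"
  then show "p \<le> L_fun \<alpha> q \<epsilon> \<delta>"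
    unfolding L_fun_eq_Sup[OF assms(1-5)] using assms by (intro cSup_upper bdd_aboveI[of _ 1]) auto
qed

lemma L_fun_large_delta:
  assumes "\<epsilon> \<ge> 0" "\<delta> \<ge> 1" "q \<le> 1"
  shows "L_fun \<alpha> q \<epsilon> \<delta> = 1"
proof -
  \<comment> \<open>with \<open>1 - \<delta> \<le> 0\<close> both distributions may be replaced by the same one\<close>
  have "approx_renyi_div \<alpha> \<delta> P Q \<le> ereal \<epsilon>" for P Q :: "bool pmf"
  proof -
    have "approx_renyi_div \<alpha> \<delta> P Q \<le> renyi_div \<alpha> P P"
      using assms(2) mult_nonpos_nonneg[of "1 - \<delta>"]
      by (intro approx_renyi_div_le_renyi_div) (auto intro: order.trans[OF _ pmf_nonneg])
    also have "\<dots> \<le> ereal \<epsilon>" using assms(1) by (simp add: renyi_div_self)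
    finally show ?thesis .
  qed
  then have "{p \<in> {q..1}. approx_renyi_div \<alpha> \<delta> (bernoulli_pmf p) (bernoulli_pmf q) \<le> ereal \<epsilon> \<and>
      approx_renyi_div \<alpha> \<delta> (bernoulli_pmf q) (bernoulli_pmf p) \<le> ereal \<epsilon>} = {q..1}"
    by auto
  then show ?thesis unfolding L_fun_def using assms(3) by simp
qed

lemma L_fun_range:
  assumes "\<alpha> > 1" "\<epsilon> \<ge> 0" "0 < \<delta>" "q \<in> {0..1}"
  shows "L_fun \<alpha> q \<epsilon> \<delta> \<in> {q..1}"
  using L_fun_indist(1)[OF assms(1,2,3) _ assms(4)] L_fun_large_delta[OF assms(2)] assms(4)
  by (cases "\<delta> < 1") auto

lemma L_fun_mono:
  assumes "\<alpha> > 1" "\<epsilon> \<ge> 0" "0 < \<delta>" "0 \<le> q" "q \<le> q'" "q' \<le> 1"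
  shows "L_fun \<alpha> q \<epsilon> \<delta> \<le> L_fun \<alpha> q' \<epsilon> \<delta>"
proof (cases "\<delta> < 1")
  case True
  have "q' \<le> L_fun \<alpha> q' \<epsilon> \<delta>" using L_fun_range assms by simp
  moreover have "L_fun \<alpha> q \<epsilon> \<delta> \<le> L_fun \<alpha> q' \<epsilon> \<delta>" if "q' < L_fun \<alpha> q \<epsilon> \<delta>"
  proof -
    define L where "L = L_fun \<alpha> q \<epsilon> \<delta>"
    have "L \<le> 1" "bern_indist \<alpha> (exp ((\<alpha> - 1) * \<epsilon>)) \<delta> L q"
      using L_fun_indist[OF assms(1-3) True] assms unfolding L_def by auto
    then have "bern_indist \<alpha> (exp ((\<alpha> - 1) * \<epsilon>)) \<delta> L q'"
      using bern_indist_mono[of \<alpha> _ \<delta> q q' L L] assms True that unfolding L_def by simp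
    then show ?thesis
      using le_L_fun_iff[OF assms(1-3) True, of q' L] assms that \<open>L \<le> 1\<close> unfolding L_def by simp
  qed
  ultimately show ?thesis by linarith
qed (use L_fun_large_delta assms in simp)

lemma L_fun_zero:
  assumes "\<alpha> > 1" "\<epsilon> \<ge> 0" "0 < \<delta>"
  shows "L_fun \<alpha> 0 \<epsilon> \<delta> = min \<delta> 1"
proof (cases "\<delta> < 1")
  case True
  have indist_0: "bern_indist \<alpha> E \<delta> p 0 \<longleftrightarrow> p \<le> \<delta>" for E p
  proof -
    have "bern_indist \<alpha> E \<delta> p 0 \<longleftrightarrow> mix_lower \<delta> p \<le> 0"
      by (auto simp: bern_indist_def bern_renyi_bounded_def mix_upper_def mix_lower_def)
    also have "\<dots> \<longleftrightarrow> p \<le> \<delta>"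
      using True by (auto simp: mix_lower_def divide_le_0_iff)
    finally show ?thesis .
  qed
  have "L_fun \<alpha> 0 \<epsilon> \<delta> \<in> {0..1}" using L_fun_range assms by simp
  then have "L_fun \<alpha> 0 \<epsilon> \<delta> = \<delta>"
    using le_L_fun_iff[OF assms True order_refl, of "L_fun \<alpha> 0 \<epsilon> \<delta>"]
      le_L_fun_iff[OF assms True order_refl, of \<delta>] indist_0 True assms(3) by auto
  with True show ?thesis by simp
qed (use L_fun_large_delta assms in simp)

definition bernoulli_set_pmf :: "('u::finite \<Rightarrow> real) \<Rightarrow> 'u set pmf" where
  "bernoulli_set_pmf a = map_pmf (\<lambda>b. {u. b u}) (Pi_pmf UNIV False (\<lambda>u. bernoulli_pmf (a u)))"

lemma mech_eq_bernoulli_set_pmf: "mech f X = bernoulli_set_pmf (\<lambda>u. f (X u))"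
  unfolding mech_def bernoulli_set_pmf_def ..

lemma pmf_bernoulli_set_pmf:
  fixes a :: "'u::finite \<Rightarrow> real"
  assumes "\<And>u. a u \<in> {0..1}"
  shows "pmf (bernoulli_set_pmf a) S = (\<Prod>u\<in>UNIV. if u \<in> S then a u else 1 - a u)"
proof -
  have "inj (\<lambda>b::'u \<Rightarrow> bool. {u. b u})"
    by (auto simp: inj_def fun_eq_iff set_eq_iff)
  then have "pmf (bernoulli_set_pmf a) {u. u \<in> S} = pmf (Pi_pmf UNIV False (\<lambda>u. bernoulli_pmf (a u))) (\<lambda>u. u \<in> S)"
    unfolding bernoulli_set_pmf_def by (rule pmf_map_inj')
  also have "\<dots> = (\<Prod>u\<in>UNIV. if u \<in> S then a u else 1 - a u)"
    using assms by (subst pmf_Pi) (auto intro!: prod.cong)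
  finally show ?thesis by simp
qed

lemma sum_subsets_prod_if:
  fixes f g :: "'u::finite \<Rightarrow> real"
  shows "(\<Sum>S\<in>UNIV. \<Prod>u\<in>UNIV. if u \<in> S then f u else g u) = (\<Prod>u\<in>UNIV. f u + g u)"
  by (subst prod_add) (auto intro!: sum.cong simp: prod.If_cases Compl_eq_Diff_UNIV)

lemma bernoulli_set_pmf_component:
  fixes p a d :: "'u::finite \<Rightarrow> real"
  assumes "\<And>u. p u \<in> {0..1}" "\<And>u. d u \<in> {0..1}" "\<And>u. bern_component (d u) (p u) (a u)"
    and "(\<Sum>u\<in>UNIV. d u) \<le> \<delta>"
  shows "(1-\<delta>) * pmf (bernoulli_set_pmf a) S \<le> pmf (bernoulli_set_pmf p) S"
proof -
  have a: "\<And>u. a u \<in> {0..1}" using assms(3) by (auto simp: bern_component_def)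
  have "(1-\<delta>) * pmf (bernoulli_set_pmf a) S
      \<le> (\<Prod>u\<in>UNIV. 1 - d u) * (\<Prod>u\<in>UNIV. if u \<in> S then a u else 1 - a u)"
    unfolding pmf_bernoulli_set_pmf[OF a]
    using a Weierstrass_prod_ineq[of UNIV d] assms(2,4)
    by (intro mult_right_mono prod_nonneg) auto
  also have "\<dots> = (\<Prod>u\<in>UNIV. (1 - d u) * (if u \<in> S then a u else 1 - a u))"
    by (simp add: prod.distrib)
  also have "\<dots> \<le> (\<Prod>u\<in>UNIV. if u \<in> S then p u else 1 - p u)"
    using assms(2,3) a by (intro prod_mono) (auto simp: bern_component_def)
  also have "\<dots> = pmf (bernoulli_set_pmf p) S"
    by (rule pmf_bernoulli_set_pmf[symmetric]) (rule assms(1))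
  finally show ?thesis .
qed

lemma renyi_div_bernoulli_set_pmf_le:
  fixes a c e :: "'u::finite \<Rightarrow> real"
  assumes "\<alpha> > 1" "\<And>u. a u \<in> {0..1}" "\<And>u. c u \<in> {0..1}"
    and "\<And>u. bern_renyi_bounded \<alpha> (exp ((\<alpha> - 1) * e u)) (a u) (c u)"
  shows "renyi_div \<alpha> (bernoulli_set_pmf a) (bernoulli_set_pmf c) \<le> ereal (\<Sum>u\<in>UNIV. e u)"
proof -
  define A where "A S u = (if u \<in> S then a u else 1 - a u)" for S u
  define C where "C S u = (if u \<in> S then c u else 1 - c u)" for S u
  have pmf_A: "pmf (bernoulli_set_pmf a) S = (\<Prod>u\<in>UNIV. A S u)"
    and pmf_C: "pmf (bernoulli_set_pmf c) S = (\<Prod>u\<in>UNIV. C S u)" for S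
    unfolding A_def C_def using pmf_bernoulli_set_pmf assms(2,3) by blast+
  have A_nonneg: "A S u \<ge> 0" and C_nonneg: "C S u \<ge> 0" for S u
    using assms(2,3)[of u] by (auto simp: A_def C_def)
  have "pmf (bernoulli_set_pmf c) S > 0" if "pmf (bernoulli_set_pmf a) S > 0" for S
  proof -
    have A_pos: "A S u > 0" for u
      using that A_nonneg[of S] unfolding pmf_A by (metis UNIV_I finite less_eq_real_def prod_zero_iff)
    have "C S u > 0" for u
      using A_pos[of u] assms(4)[of u] unfolding A_def C_def bern_renyi_bounded_def by (auto split: if_splits)
    then show ?thesis unfolding pmf_C by (simp add: prod_pos)
  qed
  moreover have "(\<Sum>S\<in>UNIV. pmf (bernoulli_set_pmf a) S powr \<alpha> * pmf (bernoulli_set_pmf c) S powr (1 - \<alpha>))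
      = (\<Prod>u\<in>UNIV. bern_renyi_sum \<alpha> (a u) (c u))"
    unfolding pmf_A pmf_C bern_renyi_sum_def
    by (simp add: prod_powr_distrib A_nonneg C_nonneg prod.distrib[symmetric] sum_subsets_prod_if[symmetric])
      (auto intro!: sum.cong prod.cong simp: A_def C_def renyi_term_def)
  moreover have "(\<Prod>u\<in>UNIV. bern_renyi_sum \<alpha> (a u) (c u)) \<le> (\<Prod>u\<in>UNIV. exp ((\<alpha> - 1) * e u))"
    using assms(4) by (intro prod_mono) (auto simp: bern_renyi_bounded_def bern_renyi_sum_def
        intro: add_nonneg_nonneg renyi_term_nonneg)
  moreover have "(\<Prod>u\<in>UNIV. exp ((\<alpha> - 1) * e u)) = exp ((\<alpha> - 1) * (\<Sum>u\<in>UNIV. e u))"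
    by (simp add: exp_sum sum_distrib_left)
  ultimately show ?thesis
    unfolding renyi_div_le_iff[OF assms(1)] by auto
qed

lemma approx_renyi_div_bernoulli_set_pmf_le:
  fixes p q a c d e :: "'u::finite \<Rightarrow> real"
  assumes "\<alpha> > 1" "\<And>u. p u \<in> {0..1}" "\<And>u. q u \<in> {0..1}" "\<And>u. d u \<in> {0..1}"
    and "\<And>u. bern_component (d u) (p u) (a u)" "\<And>u. bern_component (d u) (q u) (c u)"
    and "\<And>u. bern_renyi_bounded \<alpha> (exp ((\<alpha> - 1) * e u)) (a u) (c u)"
    and "(\<Sum>u\<in>UNIV. d u) \<le> \<delta>" "(\<Sum>u\<in>UNIV. e u) \<le> \<epsilon>"
  shows "approx_renyi_div \<alpha> \<delta> (bernoulli_set_pmf p) (bernoulli_set_pmf q) \<le> ereal \<epsilon>"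
proof -
  have "0 \<le> \<delta>" using assms(4,8) by (meson atLeastAtMost_iff order.trans sum_nonneg)
  then have "approx_renyi_div \<alpha> \<delta> (bernoulli_set_pmf p) (bernoulli_set_pmf q)
      \<le> renyi_div \<alpha> (bernoulli_set_pmf a) (bernoulli_set_pmf c)"
    using assms by (intro approx_renyi_div_le_renyi_div allI bernoulli_set_pmf_component)
  also have "\<dots> \<le> ereal (\<Sum>u\<in>UNIV. e u)"
    using assms by (intro renyi_div_bernoulli_set_pmf_le) (auto simp: bern_component_def)
  also have "\<dots> \<le> ereal \<epsilon>" using assms(9) by simp
  finally show ?thesis .
qed

definition coord_cost :: "real \<Rightarrow> real \<Rightarrow> real \<Rightarrow> real \<Rightarrow> real \<Rightarrow> real" where
  "coord_cost r c0 c1 x x' = (if x = x' then 0 else c0) + c1 * \<bar>x - x'\<bar> powr r"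

lemma coord_cost_commute: "coord_cost r c0 c1 x x' = coord_cost r c0 c1 x' x"
  by (cases "x = x'") (auto simp: coord_cost_def abs_minus_commute)

lemma coord_cost_nonneg: "0 \<le> c0 \<Longrightarrow> 0 \<le> c1 \<Longrightarrow> 0 \<le> coord_cost r c0 c1 x x'"
  by (simp add: coord_cost_def)

lemma lr_dist_powr_le:
  fixes X X' :: "'u::finite \<Rightarrow> real"
  assumes "r > 0" "lr_dist r X X' \<le> \<Delta>r"
  shows "(\<Sum>u\<in>UNIV. \<bar>X u - X' u\<bar> powr r) \<le> \<Delta>r powr r"
proof -
  define S where "S = (\<Sum>u\<in>UNIV. \<bar>X u - X' u\<bar> powr r)"
  have "S \<ge> 0" unfolding S_def by (intro sum_nonneg) auto
  then have "S = (S powr (1/r)) powr r" using assms(1) by (simp add: powr_powr)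
  also have "\<dots> \<le> \<Delta>r powr r"
    using assms unfolding lr_dist_def S_def[symmetric] by (intro powr_mono2) auto
  finally show ?thesis unfolding S_def .
qed

lemma abs_diff_le_lr_dist:
  fixes X X' :: "'u::finite \<Rightarrow> real"
  assumes "r > 0"
  shows "\<bar>X u - X' u\<bar> \<le> lr_dist r X X'"
proof -
  have "\<bar>X u - X' u\<bar> = (\<bar>X u - X' u\<bar> powr r) powr (1/r)" using assms by (simp add: powr_powr)
  also have "\<dots> \<le> lr_dist r X X'"
    unfolding lr_dist_def using assms by (intro powr_mono2 member_le_sum) auto
  finally show ?thesis .
qed

lemma sum_coord_cost_le:
  fixes X X' :: "'u::finite \<Rightarrow> real"
  assumes "r > 0" "0 \<le> c0" "0 \<le> c1" "l0_dist X X' \<le> \<Delta>0" "lr_dist r X X' \<le> \<Delta>r"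
  shows "(\<Sum>u\<in>UNIV. coord_cost r c0 c1 (X u) (X' u)) \<le> c0 * real \<Delta>0 + c1 * \<Delta>r powr r"
proof -
  have "(\<Sum>u\<in>UNIV. if X u = X' u then 0 else c0) = c0 * real (l0_dist X X')"
    by (simp add: sum.If_cases l0_dist_def Compl_eq_Diff_UNIV[symmetric] Collect_neg_eq[symmetric])
  then have "(\<Sum>u\<in>UNIV. coord_cost r c0 c1 (X u) (X' u))
      = c0 * real (l0_dist X X') + c1 * (\<Sum>u\<in>UNIV. \<bar>X u - X' u\<bar> powr r)"
    by (simp add: coord_cost_def sum.distrib sum_distrib_left)
  also have "\<dots> \<le> c0 * real \<Delta>0 + c1 * \<Delta>r powr r"
    using assms lr_dist_powr_le by (intro add_mono mult_left_mono) auto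
  finally show ?thesis .
qed

lemma neighbors_sym: "neighbors \<Delta>0 \<Delta>r r X X' \<Longrightarrow> neighbors \<Delta>0 \<Delta>r r X' X"
proof -
  have "l0_dist X' X = l0_dist X X'"
    unfolding l0_dist_def by (rule arg_cong[where f = card]) auto
  moreover have "lr_dist r X' X = lr_dist r X X'"
    unfolding lr_dist_def by (simp add: abs_minus_commute)
  ultimately show "neighbors \<Delta>0 \<Delta>r r X X' \<Longrightarrow> neighbors \<Delta>0 \<Delta>r r X' X"
    unfolding neighbors_def by simp
qed

lemma N_disc_pos: "\<Delta> > 0 \<Longrightarrow> \<Delta>disc > 0 \<Longrightarrow> N_disc \<Delta> \<Delta>disc \<ge> 1"
  unfolding N_disc_def using ceiling_le_zero[of "\<Delta> / \<Delta>disc"] by (simp add: Suc_le_eq)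

lemma nat_floor_div_gap:
  fixes x x' D Dd :: real
  assumes "0 \<le> x'" "Dd > 0" "nat \<lfloor>x'/Dd\<rfloor> < nat \<lfloor>x/Dd\<rfloor>" "x - x' \<le> D"
  defines "k \<equiv> nat \<lfloor>x/Dd\<rfloor> - nat \<lfloor>x'/Dd\<rfloor>"
  shows "Dd * real (k - 1) < x - x'" "k \<le> N_disc D Dd"
proof -
  have "0 \<le> \<lfloor>x'/Dd\<rfloor>" using assms by simp
  then have k: "real k = real_of_int \<lfloor>x/Dd\<rfloor> - real_of_int \<lfloor>x'/Dd\<rfloor>" "k \<ge> 1"
    using assms(3) unfolding k_def by linarith+
  have "real (k - 1) < x/Dd - x'/Dd"
    using k by (simp add: of_nat_diff) linarith
  also have "\<dots> = (x - x')/Dd" by (simp add: diff_divide_distrib)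
  finally have gap: "real (k - 1) < (x - x')/Dd" .
  then show "Dd * real (k - 1) < x - x'"
    using assms(2) by (simp add: pos_less_divide_eq mult.commute)
  have "(x - x')/Dd \<le> D/Dd" using assms(2,4) by (intro divide_right_mono) auto
  with gap have "real (k - 1) < \<lceil>D/Dd\<rceil>" by linarith
  then show "k \<le> N_disc D Dd" unfolding N_disc_def using k by linarith
qed

declare psi.simps [simp del]

context
  fixes \<alpha> \<epsilon>0 \<delta>0 r \<epsilon>1 \<delta>1 \<Delta>disc \<Delta> :: real
  assumes params: "\<alpha> > 1" "\<epsilon>0 > 0" "\<delta>0 > 0" "r > 0" "\<epsilon>1 > 0" "\<delta>1 > 0" "\<Delta>disc > 0" "\<Delta> > 0"
begin

abbreviation "\<psi> \<equiv> psi \<alpha> \<epsilon>0 \<delta>0 r \<epsilon>1 \<delta>1 \<Delta>disc \<Delta>"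
abbreviation "N \<equiv> N_disc \<Delta> \<Delta>disc"

definition step_eps :: "nat \<Rightarrow> real" where
  "step_eps i = \<epsilon>0 + \<epsilon>1 * (\<Delta>disc * real (i - 1)) powr r"

definition step_delta :: "nat \<Rightarrow> real" where
  "step_delta i = \<delta>0 + \<delta>1 * (\<Delta>disc * real (i - 1)) powr r"

lemma step_eps_nonneg: "step_eps i \<ge> 0"
  unfolding step_eps_def using params by simp

lemma step_delta_pos: "step_delta i > 0"
  unfolding step_delta_def using params by (simp add: add_pos_nonneg)

lemma step_delta_mono: "i \<le> j \<Longrightarrow> step_delta i \<le> step_delta j"
  unfolding step_delta_def using params by (auto intro!: mult_left_mono powr_mono2)

lemma psi_0: "\<psi> 0 = 0"
  by (subst psi.simps) simp

lemma psi_eq: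
  "n > 0 \<Longrightarrow> \<psi> n = Min ((\<lambda>i. L_fun \<alpha> (\<psi> (n - i)) (step_eps i) (step_delta i)) ` {1..min n N})"
  by (subst psi.simps) (simp add: step_eps_def step_delta_def)

lemma psi_le_L_fun:
  assumes "1 \<le> i" "i \<le> n" "i \<le> N"
  shows "\<psi> n \<le> L_fun \<alpha> (\<psi> (n - i)) (step_eps i) (step_delta i)"
proof -
  have "n > 0" using assms by simp
  then show ?thesis unfolding psi_eq[OF \<open>n > 0\<close>] using assms by (intro Min_le) auto
qed

lemma psi_range: "\<psi> n \<in> {0..1}"
proof (induction n rule: less_induct)
  case (less n)
  show ?case
  proof (cases "n = 0")
    case False
    then have "n > 0" by simp
    then have "\<psi> n \<in> (\<lambda>i. L_fun \<alpha> (\<psi> (n - i)) (step_eps i) (step_delta i)) ` {1..min n N}"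
      unfolding psi_eq[OF \<open>n > 0\<close>] using N_disc_pos[OF params(8,7)] by (intro Min_in) auto
    then obtain i where "i \<in> {1..min n N}" "\<psi> n = L_fun \<alpha> (\<psi> (n - i)) (step_eps i) (step_delta i)"
      by blast
    moreover from this have "\<psi> (n - i) \<in> {0..1}" using less \<open>n > 0\<close> by simp
    ultimately show ?thesis
      using L_fun_range[OF params(1) step_eps_nonneg[of i] step_delta_pos[of i]] by force
  qed (simp add: psi_0)
qed

lemma psi_Suc_mono: "\<psi> n \<le> \<psi> (Suc n)"
proof (induction n rule: less_induct)
  case (less n)
  show ?case
  proof (cases "n = 0")
    case True
    then show ?thesis using psi_range[of 1] by (simp add: psi_0)
  next
    case False
    have "\<psi> n \<le> L_fun \<alpha> (\<psi> (Suc n - i)) (step_eps i) (step_delta i)"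
      if i: "1 \<le> i" "i \<le> Suc n" "i \<le> N" for i
    proof (cases "i \<le> n")
      case True
      have "\<psi> (n - i) \<le> \<psi> (Suc n - i)"
        using less[of "n - i"] i True by (simp add: Suc_diff_le)
      then have "L_fun \<alpha> (\<psi> (n - i)) (step_eps i) (step_delta i)
          \<le> L_fun \<alpha> (\<psi> (Suc n - i)) (step_eps i) (step_delta i)"
        using psi_range by (intro L_fun_mono[OF params(1) step_eps_nonneg step_delta_pos]) auto
      then show ?thesis using psi_le_L_fun[OF i(1) True i(3)] by linarith
    next
      case False
      with i have "i = Suc n" by simp
      have "\<psi> n \<le> L_fun \<alpha> (\<psi> 0) (step_eps n) (step_delta n)"
        using psi_le_L_fun[of n n] \<open>n \<noteq> 0\<close> i \<open>i = Suc n\<close> by simp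
      also have "\<dots> = min (step_delta n) 1"
        by (simp add: psi_0 L_fun_zero[OF params(1) step_eps_nonneg step_delta_pos])
      also have "\<dots> \<le> min (step_delta i) 1"
        using step_delta_mono[of n i] \<open>i = Suc n\<close> by simp
      also have "\<dots> = L_fun \<alpha> (\<psi> (Suc n - i)) (step_eps i) (step_delta i)"
        using \<open>i = Suc n\<close> by (simp add: psi_0 L_fun_zero[OF params(1) step_eps_nonneg step_delta_pos])
      finally show ?thesis .
    qed
    then show ?thesis
      using N_disc_pos[OF params(8,7)] unfolding psi_eq[OF zero_less_Suc] by (intro Min.boundedI) auto
  qed
qed

lemma psi_mono: "mono \<psi>"
  by (simp add: mono_iff_le_Suc psi_Suc_mono)

lemma psi_indist:
  assumes "n' < n" "n - n' \<le> N" "step_delta (n - n') < 1"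
  shows "bern_indist \<alpha> (exp ((\<alpha> - 1) * step_eps (n - n'))) (step_delta (n - n')) (\<psi> n) (\<psi> n')"
proof -
  have "\<psi> n' \<le> \<psi> n" using psi_mono assms(1) by (simp add: monoD)
  moreover have "\<psi> n \<le> L_fun \<alpha> (\<psi> n') (step_eps (n - n')) (step_delta (n - n'))"
    using psi_le_L_fun[of "n - n'" n] assms by simp
  ultimately show ?thesis
    using le_L_fun_iff[OF params(1) step_eps_nonneg step_delta_pos assms(3)] psi_range by auto
qed

lemma step_cost_le:
  assumes "0 \<le> x'" "x - x' \<le> \<Delta>" "nat \<lfloor>x'/\<Delta>disc\<rfloor> < nat \<lfloor>x/\<Delta>disc\<rfloor>"
  defines "k \<equiv> nat \<lfloor>x/\<Delta>disc\<rfloor> - nat \<lfloor>x'/\<Delta>disc\<rfloor>"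
  shows "k \<le> N" "step_delta k \<le> coord_cost r \<delta>0 \<delta>1 x x'" "step_eps k \<le> coord_cost r \<epsilon>0 \<epsilon>1 x x'"
proof -
  note gap = nat_floor_div_gap[OF assms(1) params(7) assms(3,2), folded k_def]
  then show "k \<le> N" by simp
  have "x \<noteq> x'" using assms(3) by auto
  have "(\<Delta>disc * real (k - 1)) powr r \<le> \<bar>x - x'\<bar> powr r"
    using gap(1) params by (intro powr_mono2) auto
  then show "step_delta k \<le> coord_cost r \<delta>0 \<delta>1 x x'" "step_eps k \<le> coord_cost r \<epsilon>0 \<epsilon>1 x x'"
    unfolding step_delta_def step_eps_def coord_cost_def using \<open>x \<noteq> x'\<close> params by simp_all
qed

lemma phi_gap_witnesses:
  assumes "0 \<le> x'" "x - x' \<le> \<Delta>" "nat \<lfloor>x'/\<Delta>disc\<rfloor> < nat \<lfloor>x/\<Delta>disc\<rfloor>"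
    and "coord_cost r \<delta>0 \<delta>1 x x' < 1"
  defines "\<phi> \<equiv> phi \<alpha> \<epsilon>0 \<delta>0 r \<epsilon>1 \<delta>1 \<Delta>disc \<Delta>"
    and "d \<equiv> coord_cost r \<delta>0 \<delta>1 x x'" and "E \<equiv> exp ((\<alpha> - 1) * coord_cost r \<epsilon>0 \<epsilon>1 x x')"
  shows "\<exists>a c. bern_component d (\<phi> x) a \<and> bern_component d (\<phi> x') c \<and> bern_renyi_bounded \<alpha> E a c"
    and "\<exists>a c. bern_component d (\<phi> x') a \<and> bern_component d (\<phi> x) c \<and> bern_renyi_bounded \<alpha> E a c"
proof -
  define n n' where "n = nat \<lfloor>x/\<Delta>disc\<rfloor>" and "n' = nat \<lfloor>x'/\<Delta>disc\<rfloor>"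
  define k where "k = n - n'"
  note cost = step_cost_le[OF assms(1-3), folded n_def n'_def k_def]
  have \<phi>: "\<phi> x = \<psi> n" "\<phi> x' = \<psi> n'" unfolding \<phi>_def phi_def n_def n'_def by simp_all
  have "n' < n" using assms(3) unfolding n_def n'_def .
  have "step_delta k < 1" using cost(2) assms(4) by simp
  have E: "exp ((\<alpha> - 1) * step_eps k) \<ge> 1" using params(1) step_eps_nonneg by simp
  have "\<psi> n' \<le> \<psi> n" using psi_mono \<open>n' < n\<close> by (simp add: monoD)
  note witnesses = bern_indist_witnesses[OF E step_delta_pos \<open>step_delta k < 1\<close> _ this _
      psi_indist[OF \<open>n' < n\<close> cost(1)[unfolded k_def] \<open>step_delta k < 1\<close>[unfolded k_def], folded k_def]]
  have "exp ((\<alpha> - 1) * step_eps k) \<le> E"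
    unfolding E_def using cost(3) params(1) by simp
  then have weaken: "bern_component d p a \<and> bern_component d q c \<and> bern_renyi_bounded \<alpha> E a c"
    if "bern_component (step_delta k) p a" "bern_component (step_delta k) q c"
      "bern_renyi_bounded \<alpha> (exp ((\<alpha> - 1) * step_eps k)) a c" for p q a c
    using that cost(2) unfolding d_def by (blast intro: bern_component_mono bern_renyi_bounded_mono)
  show "\<exists>a c. bern_component d (\<phi> x) a \<and> bern_component d (\<phi> x') c \<and> bern_renyi_bounded \<alpha> E a c"
    and "\<exists>a c. bern_component d (\<phi> x') a \<and> bern_component d (\<phi> x) c \<and> bern_renyi_bounded \<alpha> E a c"
    unfolding \<phi> using witnesses psi_range weaken by (metis atLeastAtMost_iff)+
qed

lemma phi_coordinate_witness:
  assumes "0 \<le> x" "0 \<le> x'" "\<bar>x - x'\<bar> \<le> \<Delta>" "coord_cost r \<delta>0 \<delta>1 x x' < 1"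
  defines "\<phi> \<equiv> phi \<alpha> \<epsilon>0 \<delta>0 r \<epsilon>1 \<delta>1 \<Delta>disc \<Delta>"
    and "d \<equiv> coord_cost r \<delta>0 \<delta>1 x x'" and "E \<equiv> exp ((\<alpha> - 1) * coord_cost r \<epsilon>0 \<epsilon>1 x x')"
  shows "\<exists>a c. bern_component d (\<phi> x) a \<and> bern_component d (\<phi> x') c \<and> bern_renyi_bounded \<alpha> E a c"
proof -
  consider "nat \<lfloor>x'/\<Delta>disc\<rfloor> < nat \<lfloor>x/\<Delta>disc\<rfloor>" | "nat \<lfloor>x/\<Delta>disc\<rfloor> < nat \<lfloor>x'/\<Delta>disc\<rfloor>"
    | "nat \<lfloor>x/\<Delta>disc\<rfloor> = nat \<lfloor>x'/\<Delta>disc\<rfloor>" by linarith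
  then show ?thesis
  proof cases
    case 1
    then show ?thesis
      using phi_gap_witnesses(1) assms unfolding \<phi>_def d_def E_def by simp
  next
    case 2
    then show ?thesis
      using phi_gap_witnesses(2)[of x x'] assms coord_cost_commute[of r] unfolding \<phi>_def d_def E_def
      by (simp add: abs_minus_commute)
  next
    case 3
    then have "\<phi> x = \<phi> x'" unfolding \<phi>_def phi_def by simp
    moreover have "0 \<le> d" "E \<ge> 1"
      using params coord_cost_nonneg[of _ _ r] unfolding d_def E_def by simp_all
    moreover have "\<phi> x' \<in> {0..1}" unfolding \<phi>_def phi_def by (rule psi_range)
    ultimately show ?thesis
      using bern_component_self[of d] bern_renyi_bounded_refl[of "\<phi> x'" E \<alpha>] by auto
  qed
qed

lemma mech_phi_approx_renyi_le:
  fixes X X' :: "'u::finite \<Rightarrow> real" and \<Delta>0 :: nat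
  assumes "neighbors \<Delta>0 \<Delta>r r X X'" "\<Delta>r \<le> \<Delta>" "\<delta>0 * real \<Delta>0 + \<delta>1 * \<Delta>r powr r < 1"
  shows "approx_renyi_div \<alpha> (\<delta>0 * real \<Delta>0 + \<delta>1 * \<Delta>r powr r)
           (mech (phi \<alpha> \<epsilon>0 \<delta>0 r \<epsilon>1 \<delta>1 \<Delta>disc \<Delta>) X)
           (mech (phi \<alpha> \<epsilon>0 \<delta>0 r \<epsilon>1 \<delta>1 \<Delta>disc \<Delta>) X')
         \<le> ereal (\<epsilon>0 * real \<Delta>0 + \<epsilon>1 * \<Delta>r powr r)"
proof -
  define \<phi> where "\<phi> = phi \<alpha> \<epsilon>0 \<delta>0 r \<epsilon>1 \<delta>1 \<Delta>disc \<Delta>"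
  define d e where "d u = coord_cost r \<delta>0 \<delta>1 (X u) (X' u)"
    and "e u = coord_cost r \<epsilon>0 \<epsilon>1 (X u) (X' u)" for u
  have X: "\<And>u. 0 \<le> X u" "\<And>u. 0 \<le> X' u" "l0_dist X X' \<le> \<Delta>0" "lr_dist r X X' \<le> \<Delta>r"
    using assms(1) unfolding neighbors_def by auto
  have sum_d: "(\<Sum>u\<in>UNIV. d u) \<le> \<delta>0 * real \<Delta>0 + \<delta>1 * \<Delta>r powr r"
    and sum_e: "(\<Sum>u\<in>UNIV. e u) \<le> \<epsilon>0 * real \<Delta>0 + \<epsilon>1 * \<Delta>r powr r"
    unfolding d_def e_def using sum_coord_cost_le[OF params(4) _ _ X(3,4)] params by simp_all
  have d_nonneg: "0 \<le> d u" for u unfolding d_def using coord_cost_nonneg params by simp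
  have d_lt1: "d u < 1" for u
    using member_le_sum[of u UNIV d] d_nonneg sum_d assms(3) by simp
  have "\<bar>X u - X' u\<bar> \<le> \<Delta>" for u
    using abs_diff_le_lr_dist[OF params(4)] X(4) assms(2) by (meson order.trans)
  then have "\<forall>u. \<exists>a c. bern_component (d u) (\<phi> (X u)) a \<and> bern_component (d u) (\<phi> (X' u)) c \<and>
      bern_renyi_bounded \<alpha> (exp ((\<alpha> - 1) * e u)) a c"
    using phi_coordinate_witness X(1,2) d_lt1 unfolding \<phi>_def d_def e_def by blast
  then obtain a c where "\<And>u. bern_component (d u) (\<phi> (X u)) (a u)"
    "\<And>u. bern_component (d u) (\<phi> (X' u)) (c u)"
    "\<And>u. bern_renyi_bounded \<alpha> (exp ((\<alpha> - 1) * e u)) (a u) (c u)"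
    by metis
  then show ?thesis
    using psi_range d_nonneg d_lt1 sum_d sum_e unfolding mech_eq_bernoulli_set_pmf \<phi>_def phi_def
    by (intro approx_renyi_div_bernoulli_set_pmf_le[OF params(1)]) (auto simp: less_imp_le)
qed

end

theorem mainTheorem6:
  fixes \<alpha> \<epsilon>0 \<delta>0 r \<epsilon>1 \<delta>1 \<Delta>disc \<Delta> \<Delta>r :: real and \<Delta>0 :: nat
  assumes "\<alpha> > 1"
    and "\<epsilon>0 > 0" "\<delta>0 > 0" "r > 0" "\<epsilon>1 > 0" "\<delta>1 > 0" "\<Delta>disc > 0" "\<Delta> > 0"
    and "\<Delta>r \<le> \<Delta>"
    and "\<delta>0 * real \<Delta>0 + \<delta>1 * \<Delta>r powr r < 1"
  shows "is_RDP (\<delta>0 * real \<Delta>0 + \<delta>1 * \<Delta>r powr r) \<alpha> (\<epsilon>0 * real \<Delta>0 + \<epsilon>1 * \<Delta>r powr r)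
           (neighbors \<Delta>0 \<Delta>r r :: ('u::finite \<Rightarrow> real) \<Rightarrow> _ \<Rightarrow> bool)
           (mech (phi \<alpha> \<epsilon>0 \<delta>0 r \<epsilon>1 \<delta>1 \<Delta>disc \<Delta>))"
  unfolding is_RDP_def
  using mech_phi_approx_renyi_le[OF assms(1-8) _ assms(9,10)] neighbors_sym by blast

end
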